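(* Let $\mathcal A,\mathcal B,\mathcal C,\mathcal D$ be collections and $\alpha$ an ordinal. Suppose that for each $\xi<\alpha$ there are functions $\overleftarrow T_{\mathrm I,\xi}:\mathcal B\to\mathcal A$ and $\overrightarrow T_{\mathrm{II},\xi}:(\bigcup\mathcal A)\times\mathcal B\to\bigcup\mathcal B$ such that (Tr1) if $x\in\overleftarrow T_{\mathrm I,\xi}(B)$ then $\overrightarrow T_{\mathrm{II},\xi}(x,B)\in B$; and (Tr2) if $x_\xi\in\overleftarrow T_{\mathrm I,\xi}(B_\xi)$ for all $\xi<\alpha$ and $\{x_\xi:\xi<\alpha\}\in\mathcal C$, then $\{\overrightarrow T_{\mathrm{II},\xi}(x_\xi,B_\xi):\xi<\alpha\}\in\mathcal D$. Then $G^\alpha_1(\mathcal A,\mathcal C)\le_{\mathrm{II}}G^\alpha_1(\mathcal B,\mathcal D)$.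
   Context: In the game $G^\alpha_1(\mathcal E,\mathcal F)$, at each stage $\xi<\alpha$ One plays $E_\xi\in\mathcal E$ and Two picks $x_\xi\in E_\xi$; Two wins iff $\{x_\xi:\xi<\alpha\}\in\mathcal F$, otherwise One wins. A strategy for One is a function $\sigma:(\bigcup\mathcal E)^{<\alpha}\to\mathcal E$ (from the sequence of Two's previous moves); it is predetermined if it depends only on the stage $\xi$. A strategy for Two is a function $\tau:\mathcal E^{<\alpha}\to\bigcup\mathcal E$ choosing an element of One's latest move; it is Markov if it is a function $\mathcal E\times\alpha\to\bigcup\mathcal E$ of One's latest move and the stage. A strategy is winning if its player wins every play following it. $G\le_{\mathrm{II}}H$ means: (1) if Two has a winning Markov strategy in $G$ then Two has one in $H$; (2) if Two has a winning strategy in $G$ then Two has one in $H$; (3) if One has no winning strategy in $G$ then One has none in $H$; (4) if One has no winning predetermined strategy in $G$ then One has none in $H$. *)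

theory Defs
  imports "HOL-Library.FuncSet"
begin

text \<open>The ordinal alpha is represented by a set I of stages inside a well-ordered
type 'i; the stages xi < alpha are the elements of I, ordered by the well-order.\<close>

definition before :: "'i::wellorder set \<Rightarrow> 'i \<Rightarrow> 'i set" where
  "before I \<xi> = {\<eta>\<in>I. \<eta> < \<xi>}"

definition upto :: "'i::wellorder set \<Rightarrow> 'i \<Rightarrow> 'i set" where
  "upto I \<xi> = {\<eta>\<in>I. \<eta> \<le> \<xi>}"

definition one_strategy :: "'i::wellorder set \<Rightarrow> 'a set set \<Rightarrow> ('i \<Rightarrow> ('i \<Rightarrow> 'a) \<Rightarrow> 'a set) \<Rightarrow> bool" where
  "one_strategy I \<E> \<sigma> \<longleftrightarrow> (\<forall>\<xi>\<in>I. \<forall>h. \<sigma> \<xi> (restrict h (before I \<xi>)) \<in> \<E>)"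

definition follows_one :: "'i::wellorder set \<Rightarrow> ('i \<Rightarrow> ('i \<Rightarrow> 'a) \<Rightarrow> 'a set) \<Rightarrow> ('i \<Rightarrow> 'a) \<Rightarrow> bool" where
  "follows_one I \<sigma> x \<longleftrightarrow> (\<forall>\<xi>\<in>I. x \<xi> \<in> \<sigma> \<xi> (restrict x (before I \<xi>)))"

definition one_winning :: "'i::wellorder set \<Rightarrow> 'a set set \<Rightarrow> 'a set set \<Rightarrow> ('i \<Rightarrow> ('i \<Rightarrow> 'a) \<Rightarrow> 'a set) \<Rightarrow> bool" where
  "one_winning I \<E> \<F> \<sigma> \<longleftrightarrow> one_strategy I \<E> \<sigma> \<and>
     (\<forall>x. follows_one I \<sigma> x \<longrightarrow> x ` I \<notin> \<F>)"

definition one_has_winning :: "'i::wellorder set \<Rightarrow> 'a set set \<Rightarrow> 'a set set \<Rightarrow> bool" where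
  "one_has_winning I \<E> \<F> \<longleftrightarrow> (\<exists>\<sigma>. one_winning I \<E> \<F> \<sigma>)"

definition one_has_winning_predetermined :: "'i::wellorder set \<Rightarrow> 'a set set \<Rightarrow> 'a set set \<Rightarrow> bool" where
  "one_has_winning_predetermined I \<E> \<F> \<longleftrightarrow> (\<exists>\<sigma> :: 'i \<Rightarrow> 'a set.
     (\<forall>\<xi>\<in>I. \<sigma> \<xi> \<in> \<E>) \<and> (\<forall>x. (\<forall>\<xi>\<in>I. x \<xi> \<in> \<sigma> \<xi>) \<longrightarrow> x ` I \<notin> \<F>))"

definition two_strategy :: "'i::wellorder set \<Rightarrow> 'a set set \<Rightarrow> ('i \<Rightarrow> ('i \<Rightarrow> 'a set) \<Rightarrow> 'a) \<Rightarrow> bool" where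
  "two_strategy I \<E> \<tau> \<longleftrightarrow> (\<forall>\<xi>\<in>I. \<forall>E. (\<forall>\<eta>\<in>upto I \<xi>. E \<eta> \<in> \<E>) \<longrightarrow>
     \<tau> \<xi> (restrict E (upto I \<xi>)) \<in> E \<xi>)"

definition two_has_winning :: "'i::wellorder set \<Rightarrow> 'a set set \<Rightarrow> 'a set set \<Rightarrow> bool" where
  "two_has_winning I \<E> \<F> \<longleftrightarrow> (\<exists>\<tau>. two_strategy I \<E> \<tau> \<and>
     (\<forall>E. (\<forall>\<xi>\<in>I. E \<xi> \<in> \<E>) \<longrightarrow> (\<lambda>\<xi>. \<tau> \<xi> (restrict E (upto I \<xi>))) ` I \<in> \<F>))"

definition two_has_winning_markov :: "'i::wellorder set \<Rightarrow> 'a set set \<Rightarrow> 'a set set \<Rightarrow> bool" where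
  "two_has_winning_markov I \<E> \<F> \<longleftrightarrow> (\<exists>\<tau> :: 'a set \<Rightarrow> 'i \<Rightarrow> 'a.
     (\<forall>E\<in>\<E>. \<forall>\<xi>\<in>I. \<tau> E \<xi> \<in> E) \<and>
     (\<forall>E. (\<forall>\<xi>\<in>I. E \<xi> \<in> \<E>) \<longrightarrow> (\<lambda>\<xi>. \<tau> (E \<xi>) \<xi>) ` I \<in> \<F>))"

definition le_II :: "'i::wellorder set \<Rightarrow> 'a set set \<Rightarrow> 'a set set \<Rightarrow> 'b set set \<Rightarrow> 'b set set \<Rightarrow> bool" where
  "le_II I \<E> \<F> \<E>' \<F>' \<longleftrightarrow>
     (two_has_winning_markov I \<E> \<F> \<longrightarrow> two_has_winning_markov I \<E>' \<F>') \<and>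
     (two_has_winning I \<E> \<F> \<longrightarrow> two_has_winning I \<E>' \<F>') \<and>
     (\<not> one_has_winning I \<E> \<F> \<longrightarrow> \<not> one_has_winning I \<E>' \<F>') \<and>
     (\<not> one_has_winning_predetermined I \<E> \<F> \<longrightarrow> \<not> one_has_winning_predetermined I \<E>' \<F>')"

end

theory Submission
  imports Defs
begin

text \<open>Plays are translated stage by stage: a move B of One in the game on \<open>\<B>\<close> becomes
the move \<open>TI \<xi> B\<close> in the game on \<open>\<A>\<close>, and a reply x of Two there is pulled back to
\<open>TII \<xi> x B \<in> B\<close> (Tr1). By Tr2 a play won by Two in the \<open>\<A>\<close>-game translates to a play
won by Two in the \<open>\<B>\<close>-game. So Two's (Markov) winning strategies transfer forwards,
and One's (predetermined) winning strategies transfer backwards. For a general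
strategy of One the \<open>\<B>\<close>-moves of Two that it reacts to must be reconstructed from the
\<open>\<A>\<close>-moves by transfinite recursion along the stages.\<close>

definition translated_play ::
    "'i::wellorder set \<Rightarrow> ('i \<Rightarrow> 'a \<Rightarrow> 'b set \<Rightarrow> 'b) \<Rightarrow> ('i \<Rightarrow> ('i \<Rightarrow> 'b) \<Rightarrow> 'b set)
      \<Rightarrow> ('i \<Rightarrow> 'a) \<Rightarrow> 'i \<Rightarrow> 'b" where
  "translated_play I TII \<sigma> x =
     wfrec {(\<eta>, \<xi>). \<eta> < \<xi>} (\<lambda>y \<eta>. TII \<eta> (x \<eta>) (\<sigma> \<eta> (restrict y (before I \<eta>))))"

lemma translated_play_eq:
  fixes I :: "'i::wellorder set"
  shows "translated_play I TII \<sigma> x \<eta> =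
    TII \<eta> (x \<eta>) (\<sigma> \<eta> (restrict (translated_play I TII \<sigma> x) (before I \<eta>)))"
proof -
  have cut_eq: "restrict (cut y {(\<eta>, \<xi>). \<eta> < \<xi>} \<eta>) (before I \<eta>) = restrict y (before I \<eta>)"
    for y
    by (auto simp: cut_def before_def restrict_def)
  have "wf {(\<eta>::'i, \<xi>). \<eta> < \<xi>}"
    using wf by (simp add: wf_def)
  then show ?thesis
    unfolding translated_play_def by (subst wfrec) (simp_all only: cut_eq)
qed

lemma translated_play_restrict_before:
  fixes I :: "'i::wellorder set"
  shows "restrict (translated_play I TII \<sigma> (restrict x (before I \<xi>))) (before I \<xi>) =
    restrict (translated_play I TII \<sigma> x) (before I \<xi>)"
proof -
  have "translated_play I TII \<sigma> (restrict x (before I \<xi>)) \<eta> = translated_play I TII \<sigma> x \<eta>"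
    if "\<eta> \<in> I" "\<eta> < \<xi>" for \<eta>
    using that
  proof (induction \<eta> rule: less_induct)
    case (less \<eta>)
    have "restrict (translated_play I TII \<sigma> (restrict x (before I \<xi>))) (before I \<eta>) =
        restrict (translated_play I TII \<sigma> x) (before I \<eta>)"
      using less by (intro ext) (auto simp: restrict_def before_def)
    with less.prems show ?case
      by (subst (1 2) translated_play_eq) (simp add: before_def)
  qed
  then show ?thesis
    by (auto simp: restrict_def before_def)
qed

locale game_translation =
  fixes I :: "'i::wellorder set"
    and \<A> \<C> :: "'a set set" and \<B> \<D> :: "'b set set"
    and TI :: "'i \<Rightarrow> 'b set \<Rightarrow> 'a set"
    and TII :: "'i \<Rightarrow> 'a \<Rightarrow> 'b set \<Rightarrow> 'b"
  assumes TI_maps: "\<And>\<xi> B. \<xi> \<in> I \<Longrightarrow> B \<in> \<B> \<Longrightarrow> TI \<xi> B \<in> \<A>"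
    and Tr1: "\<And>\<xi> x B. \<xi> \<in> I \<Longrightarrow> B \<in> \<B> \<Longrightarrow> x \<in> TI \<xi> B \<Longrightarrow> TII \<xi> x B \<in> B"
    and Tr2: "\<And>x B. (\<forall>\<xi>\<in>I. B \<xi> \<in> \<B> \<and> x \<xi> \<in> TI \<xi> (B \<xi>)) \<Longrightarrow> x ` I \<in> \<C> \<Longrightarrow>
               (\<lambda>\<xi>. TII \<xi> (x \<xi>) (B \<xi>)) ` I \<in> \<D>"
begin

lemma two_has_winning_markov_transfer:
  assumes "two_has_winning_markov I \<A> \<C>"
  shows "two_has_winning_markov I \<B> \<D>"
proof -
  obtain \<tau> :: "'a set \<Rightarrow> 'i \<Rightarrow> 'a" where \<tau>_legal: "\<forall>A\<in>\<A>. \<forall>\<xi>\<in>I. \<tau> A \<xi> \<in> A"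
    and \<tau>_wins: "\<forall>A. (\<forall>\<xi>\<in>I. A \<xi> \<in> \<A>) \<longrightarrow> (\<lambda>\<xi>. \<tau> (A \<xi>) \<xi>) ` I \<in> \<C>"
    using assms unfolding two_has_winning_markov_def by blast
  have \<tau>_TI: "\<tau> (TI \<xi> B) \<xi> \<in> TI \<xi> B" if "\<xi> \<in> I" "B \<in> \<B>" for \<xi> B
    using that TI_maps \<tau>_legal by blast
  show ?thesis
    unfolding two_has_winning_markov_def
  proof (intro exI[of _ "\<lambda>B \<xi>. TII \<xi> (\<tau> (TI \<xi> B) \<xi>) B"] conjI allI impI ballI)
    fix B \<xi> assume "B \<in> \<B>" "\<xi> \<in> I"
    then show "TII \<xi> (\<tau> (TI \<xi> B) \<xi>) B \<in> B"
      using Tr1 \<tau>_TI by blast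
  next
    fix B assume B: "\<forall>\<xi>\<in>I. B \<xi> \<in> \<B>"
    then have "(\<lambda>\<xi>. \<tau> (TI \<xi> (B \<xi>)) \<xi>) ` I \<in> \<C>"
      using \<tau>_wins[rule_format, of "\<lambda>\<xi>. TI \<xi> (B \<xi>)"] TI_maps by blast
    with B show "(\<lambda>\<xi>. TII \<xi> (\<tau> (TI \<xi> (B \<xi>)) \<xi>) (B \<xi>)) ` I \<in> \<D>"
      using Tr2[of B "\<lambda>\<xi>. \<tau> (TI \<xi> (B \<xi>)) \<xi>"] \<tau>_TI by blast
  qed
qed

lemma two_has_winning_transfer:
  assumes "two_has_winning I \<A> \<C>"
  shows "two_has_winning I \<B> \<D>"
proof -
  obtain \<tau> where \<tau>_strategy: "two_strategy I \<A> \<tau>"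
    and \<tau>_wins: "\<forall>A. (\<forall>\<xi>\<in>I. A \<xi> \<in> \<A>) \<longrightarrow> (\<lambda>\<xi>. \<tau> \<xi> (restrict A (upto I \<xi>))) ` I \<in> \<C>"
    using assms unfolding two_has_winning_def by blast
  define reply where
    "reply B \<xi> = \<tau> \<xi> (restrict (\<lambda>\<eta>. TI \<eta> (B \<eta>)) (upto I \<xi>))" for B \<xi>
  define \<tau>' where "\<tau>' \<xi> B = TII \<xi> (reply B \<xi>) (B \<xi>)" for \<xi> B
  have reply_legal: "reply B \<xi> \<in> TI \<xi> (B \<xi>)"
    if "\<xi> \<in> I" "\<forall>\<eta>\<in>upto I \<xi>. B \<eta> \<in> \<B>" for B \<xi>
  proof -
    have "\<forall>\<eta>\<in>upto I \<xi>. TI \<eta> (B \<eta>) \<in> \<A>"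
      using that TI_maps by (auto simp: upto_def)
    with \<tau>_strategy that show ?thesis
      unfolding two_strategy_def reply_def by fastforce
  qed
  have \<tau>'_restrict: "\<tau>' \<xi> (restrict B (upto I \<xi>)) = TII \<xi> (reply B \<xi>) (B \<xi>)"
    if "\<xi> \<in> I" for B \<xi>
  proof -
    have "restrict (\<lambda>\<eta>. TI \<eta> (restrict B (upto I \<xi>) \<eta>)) (upto I \<xi>) =
        restrict (\<lambda>\<eta>. TI \<eta> (B \<eta>)) (upto I \<xi>)"
      by (rule ext) (simp add: restrict_def)
    with that show ?thesis
      by (simp add: \<tau>'_def reply_def upto_def)
  qed
  show ?thesis
    unfolding two_has_winning_def
  proof (intro exI[of _ \<tau>'] conjI allI impI)
    show "two_strategy I \<B> \<tau>'"
      unfolding two_strategy_def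
    proof (intro ballI allI impI)
      fix \<xi> B assume "\<xi> \<in> I" "\<forall>\<eta>\<in>upto I \<xi>. B \<eta> \<in> \<B>"
      moreover then have "B \<xi> \<in> \<B>"
        by (auto simp: upto_def)
      ultimately show "\<tau>' \<xi> (restrict B (upto I \<xi>)) \<in> B \<xi>"
        using \<tau>'_restrict reply_legal Tr1 by simp
    qed
  next
    fix B assume B: "\<forall>\<xi>\<in>I. B \<xi> \<in> \<B>"
    then have "(\<lambda>\<xi>. reply B \<xi>) ` I \<in> \<C>"
      using \<tau>_wins[rule_format, of "\<lambda>\<eta>. TI \<eta> (B \<eta>)"] TI_maps unfolding reply_def by blast
    moreover have "\<forall>\<xi>\<in>I. B \<xi> \<in> \<B> \<and> reply B \<xi> \<in> TI \<xi> (B \<xi>)"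
      using B reply_legal by (auto simp: upto_def)
    ultimately have "(\<lambda>\<xi>. TII \<xi> (reply B \<xi>) (B \<xi>)) ` I \<in> \<D>"
      using Tr2 by blast
    moreover have "(\<lambda>\<xi>. \<tau>' \<xi> (restrict B (upto I \<xi>))) ` I = (\<lambda>\<xi>. TII \<xi> (reply B \<xi>) (B \<xi>)) ` I"
      using \<tau>'_restrict by (intro image_cong) auto
    ultimately show "(\<lambda>\<xi>. \<tau>' \<xi> (restrict B (upto I \<xi>))) ` I \<in> \<D>"
      by simp
  qed
qed

lemma one_has_winning_transfer:
  assumes "one_has_winning I \<B> \<D>"
  shows "one_has_winning I \<A> \<C>"
proof -
  obtain \<sigma> where \<sigma>_legal: "\<And>\<xi> y. \<xi> \<in> I \<Longrightarrow> \<sigma> \<xi> (restrict y (before I \<xi>)) \<in> \<B>"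
    and \<sigma>_wins: "\<And>y. follows_one I \<sigma> y \<Longrightarrow> y ` I \<notin> \<D>"
    using assms unfolding one_has_winning_def one_winning_def one_strategy_def by blast
  define \<sigma>' where
    "\<sigma>' \<xi> x = TI \<xi> (\<sigma> \<xi> (restrict (translated_play I TII \<sigma> x) (before I \<xi>)))" for \<xi> x
  have "one_winning I \<A> \<C> \<sigma>'"
    unfolding one_winning_def
  proof (intro conjI allI impI)
    show "one_strategy I \<A> \<sigma>'"
      unfolding one_strategy_def \<sigma>'_def using \<sigma>_legal TI_maps by blast
  next
    fix x assume "follows_one I \<sigma>' x"
    define y where "y = translated_play I TII \<sigma> x"
    define B where "B \<xi> = \<sigma> \<xi> (restrict y (before I \<xi>))" for \<xi>
    have x_legal: "\<forall>\<xi>\<in>I. B \<xi> \<in> \<B> \<and> x \<xi> \<in> TI \<xi> (B \<xi>)"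
      using \<open>follows_one I \<sigma>' x\<close> \<sigma>_legal
      unfolding follows_one_def \<sigma>'_def B_def y_def translated_play_restrict_before by blast
    have y_eq: "y \<xi> = TII \<xi> (x \<xi>) (B \<xi>)" for \<xi>
      unfolding y_def B_def by (rule translated_play_eq)
    have "follows_one I \<sigma> y"
      unfolding follows_one_def using x_legal Tr1 y_eq B_def by metis
    then have "(\<lambda>\<xi>. TII \<xi> (x \<xi>) (B \<xi>)) ` I \<notin> \<D>"
      using \<sigma>_wins y_eq by (metis image_cong)
    then show "x ` I \<notin> \<C>"
      using Tr2[OF x_legal] by blast
  qed
  then show ?thesis
    unfolding one_has_winning_def by blast
qed

lemma one_has_winning_predetermined_transfer:
  assumes "one_has_winning_predetermined I \<B> \<D>"
  shows "one_has_winning_predetermined I \<A> \<C>"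
proof -
  obtain \<sigma> :: "'i \<Rightarrow> 'b set" where \<sigma>_legal: "\<forall>\<xi>\<in>I. \<sigma> \<xi> \<in> \<B>"
    and \<sigma>_wins: "\<forall>y. (\<forall>\<xi>\<in>I. y \<xi> \<in> \<sigma> \<xi>) \<longrightarrow> y ` I \<notin> \<D>"
    using assms unfolding one_has_winning_predetermined_def by blast
  have "x ` I \<notin> \<C>" if x: "\<forall>\<xi>\<in>I. x \<xi> \<in> TI \<xi> (\<sigma> \<xi>)" for x
  proof
    assume "x ` I \<in> \<C>"
    then have "(\<lambda>\<xi>. TII \<xi> (x \<xi>) (\<sigma> \<xi>)) ` I \<in> \<D>"
      using Tr2[of \<sigma> x] x \<sigma>_legal by blast
    moreover have "\<forall>\<xi>\<in>I. TII \<xi> (x \<xi>) (\<sigma> \<xi>) \<in> \<sigma> \<xi>"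
      using Tr1 x \<sigma>_legal by blast
    ultimately show False
      using \<sigma>_wins[rule_format, of "\<lambda>\<xi>. TII \<xi> (x \<xi>) (\<sigma> \<xi>)"] by blast
  qed
  moreover have "\<forall>\<xi>\<in>I. TI \<xi> (\<sigma> \<xi>) \<in> \<A>"
    using \<sigma>_legal TI_maps by blast
  ultimately show ?thesis
    unfolding one_has_winning_predetermined_def by (intro exI[of _ "\<lambda>\<xi>. TI \<xi> (\<sigma> \<xi>)"]) blast
qed

end

theorem mainTheorem7:
  fixes I :: "'i::wellorder set"
    and \<A> \<C> :: "'a set set" and \<B> \<D> :: "'b set set"
    and TI :: "'i \<Rightarrow> 'b set \<Rightarrow> 'a set"
    and TII :: "'i \<Rightarrow> 'a \<Rightarrow> 'b set \<Rightarrow> 'b"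
  assumes TI_maps: "\<And>\<xi> B. \<xi> \<in> I \<Longrightarrow> B \<in> \<B> \<Longrightarrow> TI \<xi> B \<in> \<A>"
    and TII_maps: "\<And>\<xi> x B. \<xi> \<in> I \<Longrightarrow> x \<in> \<Union>\<A> \<Longrightarrow> B \<in> \<B> \<Longrightarrow> TII \<xi> x B \<in> \<Union>\<B>"
    and Tr1: "\<And>\<xi> x B. \<xi> \<in> I \<Longrightarrow> B \<in> \<B> \<Longrightarrow> x \<in> TI \<xi> B \<Longrightarrow> TII \<xi> x B \<in> B"
    and Tr2: "\<And>x B. (\<forall>\<xi>\<in>I. B \<xi> \<in> \<B> \<and> x \<xi> \<in> TI \<xi> (B \<xi>)) \<Longrightarrow> x ` I \<in> \<C> \<Longrightarrow>
               (\<lambda>\<xi>. TII \<xi> (x \<xi>) (B \<xi>)) ` I \<in> \<D>"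
  shows "le_II I \<A> \<C> \<B> \<D>"
proof -
  interpret game_translation I \<A> \<C> \<B> \<D> TI TII
    using TI_maps Tr1 Tr2 by unfold_locales
  show ?thesis
    unfolding le_II_def
    using two_has_winning_markov_transfer two_has_winning_transfer
      one_has_winning_transfer one_has_winning_predetermined_transfer
    by blast
qed

end
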